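(* Let $q$ be a power of a prime with $q>2$. Then there is a right conjugacy closed loop of order $q^2-1$ whose right multiplication group is isomorphic to $\mathrm{GL}(2,q)$.
   Context: For a finite loop $\mathcal{L}$ the right multiplication group is the permutation group generated by the maps $R_a\colon x\mapsto xa$, $a\in\mathcal{L}$. The loop is right conjugacy closed if $\{R_a\mid a\in\mathcal{L}\}$ is closed under conjugation by its own elements. *)

theory Defs
  imports "HOL-Analysis.Determinants" "HOL-Algebra.Bij" "HOL-Algebra.Generated_Groups"
begin

definition is_loop :: "'c set \<Rightarrow> ('c \<Rightarrow> 'c \<Rightarrow> 'c) \<Rightarrow> bool" where
  "is_loop L m \<longleftrightarrow>
     (\<forall>x\<in>L. \<forall>y\<in>L. m x y \<in> L) \<and>
     (\<exists>e\<in>L. \<forall>x\<in>L. m e x = x \<and> m x e = x) \<and>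
     (\<forall>a\<in>L. \<forall>b\<in>L. \<exists>!x. x \<in> L \<and> m a x = b) \<and>
     (\<forall>a\<in>L. \<forall>b\<in>L. \<exists>!y. y \<in> L \<and> m y a = b)"

definition right_transl :: "'c set \<Rightarrow> ('c \<Rightarrow> 'c \<Rightarrow> 'c) \<Rightarrow> 'c \<Rightarrow> ('c \<Rightarrow> 'c)" where
  "right_transl L m a = restrict (\<lambda>x. m x a) L"

definition right_transls :: "'c set \<Rightarrow> ('c \<Rightarrow> 'c \<Rightarrow> 'c) \<Rightarrow> ('c \<Rightarrow> 'c) set" where
  "right_transls L m = right_transl L m ` L"

definition right_mult_group :: "'c set \<Rightarrow> ('c \<Rightarrow> 'c \<Rightarrow> 'c) \<Rightarrow> ('c \<Rightarrow> 'c) monoid" where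
  "right_mult_group L m =
     (BijGroup L) \<lparr> carrier := generate (BijGroup L) (right_transls L m) \<rparr>"

definition right_conj_closed :: "'c set \<Rightarrow> ('c \<Rightarrow> 'c \<Rightarrow> 'c) \<Rightarrow> bool" where
  "right_conj_closed L m \<longleftrightarrow>
     (\<forall>r\<in>right_transls L m. \<forall>s\<in>right_transls L m.
        inv\<^bsub>BijGroup L\<^esub> s \<otimes>\<^bsub>BijGroup L\<^esub> r \<otimes>\<^bsub>BijGroup L\<^esub> s \<in> right_transls L m)"

definition GL2 :: "('a::field ^ 2 ^ 2) monoid" where
  "GL2 = \<lparr> carrier = {A. det A \<noteq> 0}, mult = (\<lambda>A B. A ** B), one = mat 1 \<rparr>"

end

theory Submission
  imports Defs
begin

(* Fix an irreducible polynomial x^2 - a x + c over F = GF(q), and let T consist of the nonzero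
   scalar matrices and all matrices of trace a and determinant c.  A non-scalar t in T has no
   eigenvector, and by Cayley-Hamilton it maps u and t u to t u and a (t u) - c u, so it is
   determined by its value at a single nonzero vector u.  Hence T acts sharply transitively on
   the q^2 - 1 nonzero vectors, and x * y := T_y x, where T_y is the element of T mapping a fixed
   e to y, is a loop whose right translations are exactly T.  Trace and determinant are invariant
   under conjugation, so the loop is right conjugacy closed and its right multiplication group is
   the normal subgroup of GL(2,q) generated by T.  That subgroup contains the unipotent matrices,
   hence SL(2,q) and every matrix with square determinant; choosing c outside the squares when
   F has nonsquares, it contains the remaining matrices as well. *)

section \<open>Loops from sharply transitive sets of permutations\<close>

locale sharply_transitive =
  fixes X :: "'c set" and T :: "('c \<Rightarrow> 'c) set" and e :: 'c
  assumes T_subset_Bij: "T \<subseteq> Bij X"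
    and id_mem: "(\<lambda>x\<in>X. x) \<in> T"
    and base_mem: "e \<in> X"
    and ex1_transl: "\<And>u w. u \<in> X \<Longrightarrow> w \<in> X \<Longrightarrow> \<exists>!t. t \<in> T \<and> t u = w"
begin

definition transl_to :: "'c \<Rightarrow> 'c \<Rightarrow> 'c" where
  "transl_to y = (THE t. t \<in> T \<and> t e = y)"

definition smult :: "'c \<Rightarrow> 'c \<Rightarrow> 'c" where
  "smult x y = transl_to y x"

lemma T_Bij: "t \<in> T \<Longrightarrow> t \<in> Bij X"
  using T_subset_Bij by blast

lemma T_mem: "t \<in> T \<Longrightarrow> x \<in> X \<Longrightarrow> t x \<in> X"
  using T_Bij Bij_imp_funcset by blast

lemma T_bij_betw: "t \<in> T \<Longrightarrow> bij_betw t X X"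
  using T_Bij by (simp add: Bij_def)

lemma transl_to: "y \<in> X \<Longrightarrow> transl_to y \<in> T \<and> transl_to y e = y"
  unfolding transl_to_def using ex1_transl[OF base_mem] by (rule theI')

lemma transl_to_eqI: "t \<in> T \<Longrightarrow> transl_to (t e) = t"
  unfolding transl_to_def using ex1_transl[OF base_mem T_mem[OF _ base_mem]]
  by (rule the1_equality) auto

lemma is_loop_smult: "is_loop X smult"
  unfolding is_loop_def
proof (intro conjI ballI)
  fix x y assume "x \<in> X" "y \<in> X"
  then show "smult x y \<in> X" unfolding smult_def using transl_to T_mem by blast
next
  have "transl_to e = (\<lambda>x\<in>X. x)" using transl_to_eqI[OF id_mem] base_mem by simp
  then show "\<exists>u\<in>X. \<forall>x\<in>X. smult u x = x \<and> smult x u = x"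
    using base_mem transl_to by (intro bexI[of _ e]) (auto simp: smult_def)
next
  fix u w assume u: "u \<in> X" and w: "w \<in> X"
  then obtain t where t: "t \<in> T" "t u = w" using ex1_transl by blast
  show "\<exists>!x. x \<in> X \<and> smult u x = w"
  proof
    show "t e \<in> X \<and> smult u (t e) = w"
      using t base_mem by (simp add: smult_def transl_to_eqI T_mem)
    fix x assume "x \<in> X \<and> smult u x = w"
    then have "transl_to x = t"
      using ex1_transl[OF u w] t transl_to unfolding smult_def by blast
    then show "x = t e" using \<open>x \<in> X \<and> _\<close> transl_to by metis
  qed
next
  fix u w assume u: "u \<in> X" and w: "w \<in> X"
  have bij: "bij_betw (transl_to u) X X" using transl_to[OF u] T_bij_betw by blast
  then obtain y where y: "y \<in> X" "transl_to u y = w"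
    using w by (metis bij_betw_imp_surj_on imageE)
  show "\<exists>!y. y \<in> X \<and> smult y u = w"
  proof (rule ex1I[of _ y])
    show "y \<in> X \<and> smult y u = w" using y by (simp add: smult_def)
    fix y' assume "y' \<in> X \<and> smult y' u = w"
    then show "y' = y" using y bij by (auto simp: smult_def bij_betw_def inj_on_def)
  qed
qed

lemma right_transl_eq: "y \<in> X \<Longrightarrow> right_transl X smult y = transl_to y"
  using transl_to[of y] T_Bij
  by (auto simp: right_transl_def smult_def Bij_def extensional_restrict)

lemma right_transls_eq: "right_transls X smult = T"
proof
  show "right_transls X smult \<subseteq> T"
    unfolding right_transls_def using right_transl_eq transl_to by auto
  show "T \<subseteq> right_transls X smult"
  proof
    fix t assume t: "t \<in> T"
    then have "t = right_transl X smult (t e)"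
      using base_mem T_mem right_transl_eq transl_to_eqI by metis
    then show "t \<in> right_transls X smult"
      unfolding right_transls_def using t base_mem T_mem by blast
  qed
qed

lemma right_conj_closed_image:
  assumes hom: "group_hom G (BijGroup X) \<phi>" and T0: "T0 \<subseteq> carrier G" "T = \<phi> ` T0"
    and conj: "\<And>r s. r \<in> T0 \<Longrightarrow> s \<in> T0 \<Longrightarrow> inv\<^bsub>G\<^esub> s \<otimes>\<^bsub>G\<^esub> r \<otimes>\<^bsub>G\<^esub> s \<in> T0"
  shows "right_conj_closed X smult"
  unfolding right_conj_closed_def right_transls_eq
proof (intro ballI)
  interpret group_hom G "BijGroup X" \<phi> by (rule hom)
  fix r s assume "r \<in> T" "s \<in> T"
  then obtain r0 s0 where r0: "r0 \<in> T0" "r = \<phi> r0" and s0: "s0 \<in> T0" "s = \<phi> s0"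
    using T0 by auto
  have "inv\<^bsub>BijGroup X\<^esub> s \<otimes>\<^bsub>BijGroup X\<^esub> r \<otimes>\<^bsub>BijGroup X\<^esub> s
        = \<phi> (inv\<^bsub>G\<^esub> s0 \<otimes>\<^bsub>G\<^esub> r0 \<otimes>\<^bsub>G\<^esub> s0)"
    using r0 s0 T0 by (simp add: subsetD)
  then show "inv\<^bsub>BijGroup X\<^esub> s \<otimes>\<^bsub>BijGroup X\<^esub> r \<otimes>\<^bsub>BijGroup X\<^esub> s \<in> T"
    using conj[OF r0(1) s0(1)] T0 by simp
qed

lemma right_mult_group_iso:
  assumes hom: "group_hom G (BijGroup X) \<phi>" and inj: "inj_on \<phi> (carrier G)"
    and T0: "T0 \<subseteq> carrier G" "T = \<phi> ` T0" and gen: "generate G T0 = carrier G"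
  shows "right_mult_group X smult \<cong> G"
proof -
  interpret group_hom G "BijGroup X" \<phi> by (rule hom)
  have "carrier (right_mult_group X smult) = generate (BijGroup X) (\<phi> ` T0)"
    by (simp add: right_mult_group_def right_transls_eq flip: T0(2))
  also have "\<dots> = \<phi> ` carrier G"
    using generate_img[OF T0(1)] gen by simp
  finally have carrier: "carrier (right_mult_group X smult) = \<phi> ` carrier G" .
  have "\<phi> \<in> iso G (right_mult_group X smult)"
  proof (rule isoI)
    show "\<phi> \<in> hom G (right_mult_group X smult)"
      using carrier by (intro homI) (auto simp: right_mult_group_def)
    show "bij_betw \<phi> (carrier G) (carrier (right_mult_group X smult))"
      using inj carrier by (simp add: bij_betw_def)
  qed
  then show ?thesis using G.iso_sym is_isoI by blast
qed

end

definition mat2 :: "'a \<Rightarrow> 'a \<Rightarrow> 'a \<Rightarrow> 'a \<Rightarrow> 'a^2^2" where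
  "mat2 p q r s = (\<chi> i j. if i = 1 then if j = 1 then p else q else if j = 1 then r else s)"

definition vec2 :: "'a \<Rightarrow> 'a \<Rightarrow> 'a^2" where
  "vec2 x y = (\<chi> i. if i = 1 then x else y)"

lemma mat2_nth [simp]:
  "mat2 p q r s $ 1 $ 1 = p" "mat2 p q r s $ 1 $ 2 = q"
  "mat2 p q r s $ 2 $ 1 = r" "mat2 p q r s $ 2 $ 2 = s"
  by (simp_all add: mat2_def)

lemma vec2_nth [simp]: "vec2 x y $ 1 = x" "vec2 x y $ 2 = y"
  by (simp_all add: vec2_def)

lemma mat2_cases: obtains p q r s where "A = mat2 p q r s"
proof
  show "A = mat2 (A$1$1) (A$1$2) (A$2$1) (A$2$2)"
    unfolding mat2_def vec_eq_iff by (simp add: forall_2)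
qed

lemma vec2_cases: obtains x y where "v = vec2 x y"
proof
  show "v = vec2 (v$1) (v$2)"
    unfolding vec2_def vec_eq_iff by (simp add: forall_2)
qed

lemma mat2_eq_iff [simp]:
  "mat2 p q r s = mat2 p' q' r' s' \<longleftrightarrow> p = p' \<and> q = q' \<and> r = r' \<and> s = s'"
  unfolding mat2_def vec_eq_iff by (auto simp: forall_2)

lemma vec2_eq_iff [simp]: "vec2 x y = vec2 x' y' \<longleftrightarrow> x = x' \<and> y = y'"
  unfolding vec2_def vec_eq_iff by (auto simp: forall_2)

lemma vec2_eq_0_iff [simp]: "vec2 x y = 0 \<longleftrightarrow> x = 0 \<and> y = 0"
  unfolding vec2_def vec_eq_iff by (auto simp: forall_2)

lemma mat2_mult [simp]:
  fixes p :: "'a::comm_semiring_1"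
  shows "mat2 p q r s ** mat2 p' q' r' s' =
    mat2 (p * p' + q * r') (p * q' + q * s') (r * p' + s * r') (r * q' + s * s')"
  unfolding matrix_matrix_mult_def mat2_def vec_eq_iff by (simp add: sum_2 forall_2)

lemma mat2_mulv [simp]:
  fixes p :: "'a::comm_semiring_1"
  shows "mat2 p q r s *v vec2 x y = vec2 (p * x + q * y) (r * x + s * y)"
  unfolding matrix_vector_mult_def mat2_def vec2_def vec_eq_iff by (simp add: sum_2 forall_2)

lemma vec2_smult [simp]: "k *s vec2 x y = vec2 (k * x) (k * y)"
  unfolding vec2_def vec_eq_iff by (simp add: forall_2)

lemma vec2_diff [simp]: "vec2 x y - vec2 x' y' = vec2 (x - x') (y - y')"
  unfolding vec2_def vec_eq_iff by (simp add: forall_2)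

lemma det_mat2 [simp]: "det (mat2 p q r s) = p * s - q * r"
  by (simp add: det_2)

lemma trace_mat2 [simp]: "trace (mat2 p q r s) = p + s"
  by (simp add: trace_def sum_2)

lemma mat_eq_mat2: "mat l = mat2 l 0 0 l"
  unfolding mat2_def mat_def vec_eq_iff by (simp add: forall_2)

lemma mat_mulv: "mat l *v (v :: 'a::comm_ring_1^2) = l *s v"
  by (cases v rule: vec2_cases) (simp add: mat_eq_mat2)

lemma mat_mult_commute: "(A :: 'a::comm_ring_1^2^2) ** mat l = mat l ** A"
  by (cases A rule: mat2_cases) (simp add: mat_eq_mat2 mult.commute)

lemma GL2_simps [simp]:
  "carrier GL2 = {A. det A \<noteq> 0}" "mult GL2 A B = A ** B" "one GL2 = mat 1"
  by (simp_all add: GL2_def)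

lemma det_inverse_ne_0:
  fixes A :: "'a::field^'n^'n"
  assumes "B ** A = mat 1" shows "det A \<noteq> 0" "det B \<noteq> 0"
  using arg_cong[OF assms, of det] by (auto simp: det_mul det_I)

lemma ex_inverse:
  fixes A :: "'a::field^'n^'n"
  assumes "det A \<noteq> 0" obtains B where "B ** A = mat 1" "A ** B = mat 1"
  using assms invertible_det_nz unfolding invertible_def by blast

lemma group_GL2: "group (GL2 :: ('a::field^2^2) monoid)"
proof (rule groupI)
  fix A :: "'a^2^2" assume "A \<in> carrier GL2"
  then obtain B where "B ** A = mat 1" using ex_inverse by auto
  then show "\<exists>B\<in>carrier GL2. B \<otimes>\<^bsub>GL2\<^esub> A = \<one>\<^bsub>GL2\<^esub>"
    using det_inverse_ne_0(2) by (intro bexI[of _ B]) auto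
qed (auto simp: det_mul det_I matrix_mul_assoc)

lemma GL2_inv_eqI: "(B::'a::field^2^2) ** A = mat 1 \<Longrightarrow> inv\<^bsub>GL2\<^esub> A = B"
  by (rule group.inv_equality[OF group_GL2]) (simp_all add: det_inverse_ne_0)

lemma GL2_subgroup_cancel_left:
  assumes H: "subgroup H GL2" and "M \<in> H" "M ** X \<in> H"
  shows "X \<in> H"
proof -
  interpret group GL2 by (rule group_GL2)
  have M: "M \<in> carrier GL2" and MX: "M ** X \<in> carrier GL2"
    using assms subgroup.subset by blast+
  then have X: "X \<in> carrier GL2" by (simp add: det_mul)
  have "X = inv\<^bsub>GL2\<^esub> M \<otimes>\<^bsub>GL2\<^esub> (M ** X)"
    using inv_solve_left[OF X M MX] by simp
  then show ?thesis using assms by (metis subgroup.m_closed subgroup.m_inv_closed)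
qed

lemma GL2_subgroup_cancel_right:
  assumes H: "subgroup H GL2" and "M \<in> H" "X ** M \<in> H"
  shows "X \<in> H"
proof -
  interpret group GL2 by (rule group_GL2)
  have M: "M \<in> carrier GL2" and XM: "X ** M \<in> carrier GL2"
    using assms subgroup.subset by blast+
  then have X: "X \<in> carrier GL2" by (simp add: det_mul)
  have "X = (X ** M) \<otimes>\<^bsub>GL2\<^esub> inv\<^bsub>GL2\<^esub> M"
    using inv_solve_right[OF X XM M] by simp
  then show ?thesis using assms by (metis subgroup.m_closed subgroup.m_inv_closed)
qed

lemma GL2_normal_conj:
  assumes H: "H \<lhd> GL2" and "A \<in> H" and PQ: "P ** Q = mat 1"
  shows "P ** A ** Q \<in> H"
proof -
  have "Q ** P = mat 1" using PQ matrix_left_right_inverse by blast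
  then have "inv\<^bsub>GL2\<^esub> P = Q" and "P \<in> carrier GL2"
    by (simp_all add: GL2_inv_eqI det_inverse_ne_0)
  then show ?thesis using normal.inv_op_closed2[OF H] \<open>A \<in> H\<close> by fastforce
qed

section \<open>A sharply transitive set of matrices\<close>

definition scalar_mats :: "('a::field^2^2) set" where
  "scalar_mats = {mat l | l. l \<noteq> 0}"

definition char_class :: "'a::field \<Rightarrow> 'a \<Rightarrow> ('a^2^2) set" where
  "char_class a c = {A. trace A = a \<and> det A = c}"

definition sharp_set :: "'a::field \<Rightarrow> 'a \<Rightarrow> ('a^2^2) set" where
  "sharp_set a c = scalar_mats \<union> char_class a c"

definition companion :: "'a::field \<Rightarrow> 'a \<Rightarrow> 'a^2^2" where
  "companion a c = mat2 0 (- c) 1 a"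

definition columns2 :: "'a::field^2 \<Rightarrow> 'a^2 \<Rightarrow> 'a^2^2" where
  "columns2 u w = mat2 (u$1) (w$1) (u$2) (w$2)"

lemma companion_mem: "companion a c \<in> char_class a c"
  by (simp add: companion_def char_class_def)

lemma columns2_mulv: "columns2 u w *v vec2 1 0 = u" "columns2 u w *v vec2 0 1 = w"
  by (cases u rule: vec2_cases; cases w rule: vec2_cases; simp add: columns2_def)+

lemma mult_columns2: "A ** columns2 u w = columns2 (A *v u) (A *v w)"
  by (cases A rule: mat2_cases; cases u rule: vec2_cases; cases w rule: vec2_cases)
    (simp add: columns2_def)

lemma det_columns2_eq_0:
  assumes "u \<noteq> 0"
  shows "det (columns2 u w) = 0 \<longleftrightarrow> (\<exists>l. w = l *s u)"
proof -
  obtain x y x' y' where uw: "u = vec2 x y" "w = vec2 x' y'"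
    by (meson vec2_cases)
  have "x * y' - x' * y = 0 \<longleftrightarrow> (\<exists>l. x' = l * x \<and> y' = l * y)"
  proof
    assume "x * y' - x' * y = 0"
    moreover have "x \<noteq> 0 \<or> y \<noteq> 0" using assms uw by simp
    ultimately show "\<exists>l. x' = l * x \<and> y' = l * y"
    proof (elim disjE)
      assume "x \<noteq> 0" "x * y' - x' * y = 0"
      then show ?thesis by (intro exI[of _ "x' / x"]) (simp add: field_simps)
    next
      assume "y \<noteq> 0" "x * y' - x' * y = 0"
      then show ?thesis by (intro exI[of _ "y' / y"]) (simp add: field_simps)
    qed
  qed (auto simp: algebra_simps)
  then show ?thesis by (simp add: uw columns2_def)
qed

lemma char_class_conj:
  assumes "A \<in> char_class a c" "P ** Q = mat 1"
  shows "P ** A ** Q \<in> char_class a c"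
proof -
  have QP: "Q ** P = mat 1" using assms(2) matrix_left_right_inverse by blast
  have "trace (P ** A ** Q) = trace (Q ** P ** A)"
    by (metis matrix_mul_assoc trace_mul_sym)
  moreover have "det (P ** A ** Q) = det (Q ** P) * det A"
    by (simp add: det_mul)
  ultimately show ?thesis using assms QP by (simp add: char_class_def det_I)
qed

lemma sharp_set_conj:
  assumes "t \<in> sharp_set a c" "P ** Q = mat 1"
  shows "P ** t ** Q \<in> sharp_set a c"
proof (cases "t \<in> scalar_mats")
  case True
  then obtain l where "t = mat l" by (auto simp: scalar_mats_def)
  then have "P ** t ** Q = t" using assms(2)
    by (metis mat_mult_commute matrix_mul_assoc matrix_mul_lid)
  then show ?thesis using assms(1) by simp
next
  case False
  then show ?thesis
    using assms char_class_conj[OF _ assms(2)] by (simp add: sharp_set_def)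
qed

lemma sharp_set_GL2_conj:
  assumes "t \<in> sharp_set a c" "g \<in> carrier GL2"
  shows "inv\<^bsub>GL2\<^esub> g \<otimes>\<^bsub>GL2\<^esub> t \<otimes>\<^bsub>GL2\<^esub> g \<in> sharp_set a c"
proof -
  have "inv\<^bsub>GL2\<^esub> g ** g = mat 1"
    using group.l_inv[OF group_GL2 assms(2)] by simp
  then show ?thesis using sharp_set_conj[OF assms(1)] by simp
qed

lemma cayley_hamilton_mulv:
  assumes "A \<in> char_class a c"
  shows "A *v (A *v v) = a *s (A *v v) - c *s v"
proof -
  obtain p q r s x y where Av: "A = mat2 p q r s" "v = vec2 x y"
    by (meson mat2_cases vec2_cases)
  then have a: "a = p + s" and c: "c = p * s - q * r"
    using assms by (auto simp: char_class_def)
  show ?thesis unfolding Av a c by (simp add: algebra_simps)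
qed

locale irreducible_quadratic =
  fixes a c :: "'a::field"
  assumes no_root: "r * r - a * r + c \<noteq> 0"
begin

lemma c_ne_0: "c \<noteq> 0"
  using no_root[of 0] by simp

lemma no_eigenvector:
  assumes A: "A \<in> char_class a c" and eig: "A *v v = l *s v"
  shows "v = 0"
proof -
  have "(l * l - a * l + c) *s v = 0"
    using cayley_hamilton_mulv[OF A, of v] unfolding eig vector_scalar_commute
    by (simp add: vec_eq_iff algebra_simps)
  then show ?thesis using no_root[of l] by simp
qed

lemma sharp_set_det: "t \<in> sharp_set a c \<Longrightarrow> det t \<noteq> 0"
  using c_ne_0 by (auto simp: sharp_set_def scalar_mats_def char_class_def mat_eq_mat2)

lemma sharp_set_ex:
  assumes u: "u \<noteq> 0" and w: "w \<noteq> 0"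
  shows "\<exists>t\<in>sharp_set a c. t *v u = w"
proof (cases "det (columns2 u w) = 0")
  case True
  then obtain l where l: "w = l *s u" using det_columns2_eq_0[OF u] by blast
  then have "mat l \<in> sharp_set a c" using w by (auto simp: sharp_set_def scalar_mats_def)
  then show ?thesis using l by (intro bexI[of _ "mat l"]) (simp_all add: mat_mulv)
next
  case False
  define P where "P = columns2 u w"
  obtain P' where P': "P' ** P = mat 1" "P ** P' = mat 1"
    using False ex_inverse unfolding P_def by blast
  have "P ** companion a c ** P' \<in> sharp_set a c"
    using char_class_conj[OF companion_mem P'(2)] by (simp add: sharp_set_def)
  moreover have "P' *v u = vec2 1 0"
    by (metis P'(1) P_def columns2_mulv(1) matrix_vector_mul_assoc matrix_vector_mul_lid)
  then have "(P ** companion a c ** P') *v u = w"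
    by (simp add: P_def companion_def columns2_mulv flip: matrix_vector_mul_assoc)
  ultimately show ?thesis by blast
qed

lemma sharp_set_eigen_scalar:
  assumes "t \<in> sharp_set a c" "u \<noteq> 0" "t *v u = l *s u"
  shows "t = mat l"
proof -
  have "t \<notin> char_class a c" using assms no_eigenvector by blast
  then obtain l' where "t = mat l'" using assms(1) by (auto simp: sharp_set_def scalar_mats_def)
  then show ?thesis using assms(2,3) by (simp add: mat_mulv)
qed

lemma sharp_set_unique:
  assumes u: "u \<noteq> 0" and t: "t1 \<in> sharp_set a c" "t2 \<in> sharp_set a c"
    and eq: "t1 *v u = t2 *v u"
  shows "t1 = t2"
proof -
  define w where "w = t1 *v u"
  show ?thesis
  proof (cases "det (columns2 u w) = 0")
    case True
    then obtain l where "w = l *s u" using det_columns2_eq_0[OF u] by blast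
    then have "t1 = mat l" "t2 = mat l"
      using sharp_set_eigen_scalar[OF _ u] t eq w_def by metis+
    then show ?thesis by simp
  next
    case False
    have CH: "t ** columns2 u w = columns2 w (a *s w - c *s u)"
      if t: "t \<in> sharp_set a c" and tu: "t *v u = w" for t
    proof -
      have "t \<notin> scalar_mats"
        using False tu det_columns2_eq_0[OF u] by (auto simp: scalar_mats_def mat_mulv)
      then have "t \<in> char_class a c" using t by (simp add: sharp_set_def)
      from cayley_hamilton_mulv[OF this, of u] show ?thesis
        using tu by (simp add: mult_columns2)
    qed
    have "t1 ** columns2 u w = t2 ** columns2 u w"
      using CH t eq w_def by simp
    moreover obtain P' where "columns2 u w ** P' = mat 1"
      using False ex_inverse by blast
    ultimately show ?thesis
      by (metis matrix_mul_assoc matrix_mul_rid)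
  qed
qed

end

lemma mulv_ne_0: "det (A::'a::field^'n^'n) \<noteq> 0 \<Longrightarrow> v \<noteq> 0 \<Longrightarrow> A *v v \<noteq> 0"
  by (metis inj_matrix_vector_mult invertible_det_nz inj_eq matrix_vector_mult_0_right)

(* The loop must live on a set of natural numbers, so the nonzero vectors are transported along
   an injection enc. *)
locale plane_encoding =
  fixes enc :: "'a::field^2 \<Rightarrow> 'c"
  assumes inj_enc: "inj enc"
begin

definition points :: "'c set" where
  "points = enc ` (- {0})"

definition lin_perm :: "'a^2^2 \<Rightarrow> 'c \<Rightarrow> 'c" where
  "lin_perm A = (\<lambda>x\<in>points. enc (A *v inv_into UNIV enc x))"

lemma enc_mem_points: "v \<noteq> 0 \<Longrightarrow> enc v \<in> points"
  by (simp add: points_def)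

lemma pointsE:
  assumes "x \<in> points" obtains v where "x = enc v" "v \<noteq> 0"
  using assms by (auto simp: points_def)

lemma lin_perm_enc: "v \<noteq> 0 \<Longrightarrow> lin_perm A (enc v) = enc (A *v v)"
  by (simp add: lin_perm_def enc_mem_points inj_enc)

lemma lin_perm_mem: "det A \<noteq> 0 \<Longrightarrow> x \<in> points \<Longrightarrow> lin_perm A x \<in> points"
  by (auto simp: points_def lin_perm_enc mulv_ne_0 enc_mem_points)

lemma lin_perm_mult:
  assumes B: "det B \<noteq> 0"
  shows "lin_perm (A ** B) = compose points (lin_perm A) (lin_perm B)"
proof
  fix x show "lin_perm (A ** B) x = compose points (lin_perm A) (lin_perm B) x"
  proof (cases "x \<in> points")
    case True
    then obtain v where "x = enc v" "v \<noteq> 0" by (rule pointsE)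
    then show ?thesis
      using B by (simp add: compose_def lin_perm_enc enc_mem_points mulv_ne_0 matrix_vector_mul_assoc)
  qed (simp add: compose_def lin_perm_def)
qed

lemma lin_perm_Bij:
  assumes A: "det A \<noteq> 0" shows "lin_perm A \<in> Bij points"
proof -
  obtain B where BA: "B ** A = mat 1" and AB: "A ** B = mat 1" using A ex_inverse by blast
  have "lin_perm B (lin_perm A x) = x" "lin_perm A (lin_perm B x) = x" if "x \<in> points" for x
    using that det_inverse_ne_0[OF BA]
    by (auto elim!: pointsE simp: lin_perm_enc mulv_ne_0 matrix_vector_mul_assoc AB BA)
  then have "bij_betw (lin_perm A) points points"
    using lin_perm_mem A det_inverse_ne_0[OF BA]
    by (intro bij_betw_byWitness[where f' = "lin_perm B"]) auto
  then show ?thesis by (simp add: Bij_def lin_perm_def)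
qed

lemma group_hom_lin_perm: "group_hom GL2 (BijGroup points) lin_perm"
proof -
  have "lin_perm \<in> hom GL2 (BijGroup points)"
    by (rule homI) (auto simp: BijGroup_def lin_perm_Bij lin_perm_mult det_mul)
  then show ?thesis
    by (simp add: group_hom_def group_hom_axioms_def group_GL2 group_BijGroup)
qed

lemma inj_on_lin_perm: "inj_on lin_perm (carrier GL2)"
proof (rule inj_onI)
  fix A B :: "'a^2^2" assume "lin_perm A = lin_perm B"
  then have "A *v v = B *v v" if "v \<noteq> 0" for v
    using that lin_perm_enc inj_enc by (metis injD)
  from this[of "vec2 1 0"] this[of "vec2 0 1"] show "A = B"
    by (cases A rule: mat2_cases; cases B rule: mat2_cases) simp
qed

end

locale quadratic_plane = irreducible_quadratic a c + plane_encoding enc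
  for a c :: "'a::field" and enc :: "'a^2 \<Rightarrow> 'c"
begin

lemma sharply_transitive_lin_perm:
  "sharply_transitive points (lin_perm ` sharp_set a c) (enc (vec2 1 0))"
proof
  show "lin_perm ` sharp_set a c \<subseteq> Bij points"
    using lin_perm_Bij sharp_set_det by blast
  have "lin_perm (mat 1) = (\<lambda>x\<in>points. x)"
    unfolding lin_perm_def by (rule restrict_ext) (auto elim!: pointsE simp: inj_enc)
  moreover have "mat 1 \<in> sharp_set a c" by (auto simp: sharp_set_def scalar_mats_def)
  ultimately show "(\<lambda>x\<in>points. x) \<in> lin_perm ` sharp_set a c" by force
  show "enc (vec2 1 0) \<in> points" by (simp add: enc_mem_points)
next
  fix x y assume "x \<in> points" "y \<in> points"
  then obtain u w where u: "x = enc u" "u \<noteq> 0" and w: "y = enc w" "w \<noteq> 0"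
    by (auto simp: points_def)
  obtain t where t: "t \<in> sharp_set a c" "t *v u = w" using sharp_set_ex[OF u(2) w(2)] by blast
  show "\<exists>!f. f \<in> lin_perm ` sharp_set a c \<and> f x = y"
  proof
    show "lin_perm t \<in> lin_perm ` sharp_set a c \<and> lin_perm t x = y"
      using t u w by (simp add: lin_perm_enc)
    fix f assume "f \<in> lin_perm ` sharp_set a c \<and> f x = y"
    then obtain s where s: "s \<in> sharp_set a c" "f = lin_perm s" "enc (s *v u) = enc w"
      using u w by (auto simp: lin_perm_enc)
    then have "s = t" using sharp_set_unique[OF u(2) s(1) t(1)] t(2) inj_enc by (simp add: inj_eq)
    then show "f = lin_perm t" using s by simp
  qed
qed

end

section \<open>The sharply transitive set generates GL(2)\<close>

locale GL2_generating = irreducible_quadratic a c for a c :: "'a::field" +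
  assumes square_classes: "\<And>d. d \<noteq> 0 \<Longrightarrow> \<exists>z. d = z * z \<or> d = c * (z * z)"
    and not_F2: "\<exists>\<mu>::'a. \<mu> \<noteq> 0 \<and> \<mu> \<noteq> 1"
begin

lemma non_involutive_unit_or_F3: "(\<exists>\<mu>::'a. \<mu> \<noteq> 0 \<and> \<mu> * \<mu> \<noteq> 1) \<or> (a \<noteq> 0 \<and> (2::'a) \<noteq> 0)"
proof (cases "\<exists>\<mu>::'a. \<mu> \<noteq> 0 \<and> \<mu> * \<mu> \<noteq> 1")
  case involutive: False
  have unit_pm1: "\<mu> = 1 \<or> \<mu> = -1" if "\<mu> \<noteq> 0" for \<mu> :: 'a
    using involutive that by (auto simp: square_eq_1_iff)
  obtain \<mu> :: 'a where "\<mu> \<noteq> 0" "\<mu> \<noteq> 1" using not_F2 by blast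
  then have "-1 \<noteq> (1::'a)" using unit_pm1 by blast
  then have "1 + 1 \<noteq> (0::'a)" by (simp add: add_eq_0_iff)
  then have two: "(2::'a) \<noteq> 0" by simp
  have "a \<noteq> 0"
  proof
    assume a: "a = 0"
    have "1 + c \<noteq> 0" using no_root[of 1] by (simp add: a)
    then have "c \<noteq> -1" by (simp add: add_eq_0_iff)
    then have c: "c = 1" using unit_pm1 c_ne_0 by blast
    obtain z where "-1 = z * z \<or> -1 = c * (z * z)" using square_classes[of "-1"] by auto
    then have "z * z = -1" by (auto simp: c)
    then have "z * z + 1 = 0" by simp
    then show False using no_root[of z] by (simp add: a c)
  qed
  with two show ?thesis by simp
qed simp

context
  fixes H assumes normal: "H \<lhd> GL2" and sharp_subset: "sharp_set a c \<subseteq> H"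
begin

lemma subgroup_H: "subgroup H GL2"
  using normal by (rule normal_imp_subgroup)

lemma mult_mem: "A \<in> H \<Longrightarrow> B \<in> H \<Longrightarrow> A ** B \<in> H"
  using subgroup.m_closed[OF subgroup_H] by fastforce

lemma scalar_mem: "l \<noteq> 0 \<Longrightarrow> mat l \<in> H"
  using sharp_subset by (auto simp: sharp_set_def scalar_mats_def)

lemma char_class_mem: "A \<in> char_class a c \<Longrightarrow> A \<in> H"
  using sharp_subset by (auto simp: sharp_set_def)

lemma lower_unipotent_mem_if_unit:
  fixes \<mu> :: 'a
  assumes \<mu>: "\<mu> \<noteq> 0" "\<mu> * \<mu> \<noteq> 1" shows "mat2 1 0 x 1 \<in> H"
proof -
  \<comment> \<open>\<open>B\<close> is the commutator of \<open>diag \<mu> 1\<close> with the companion matrix, a quotient of two elements of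
    \<open>char_class a c\<close>; conjugating \<open>B\<close> by a lower unipotent matrix multiplies it by another one.\<close>
  define B where "B = mat2 \<mu> 0 ((a / \<mu> - a) / c) (1 / \<mu>)"
  have "B ** companion a c \<in> char_class a c"
    using \<mu> c_ne_0 by (simp add: B_def companion_def char_class_def field_simps)
  then have B: "B \<in> H"
    using GL2_subgroup_cancel_right[OF subgroup_H] char_class_mem companion_mem by blast
  define t where "t = x / (\<mu> * \<mu> - 1)"
  have "mat2 1 0 t 1 ** mat2 1 0 (- t) 1 = mat 1" by (simp add: mat_eq_mat2)
  then have "mat2 1 0 t 1 ** B ** mat2 1 0 (- t) 1 \<in> H"
    using GL2_normal_conj[OF normal B] by blast
  moreover have "B ** mat2 1 0 x 1 = mat2 1 0 t 1 ** B ** mat2 1 0 (- t) 1"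
  proof -
    have "t * (\<mu> * \<mu> - 1) = x" using \<mu> by (simp add: t_def)
    moreover have "t * \<mu> - t / \<mu> = t * (\<mu> * \<mu> - 1) / \<mu>"
      using \<mu> by (simp add: field_simps)
    ultimately have "x / \<mu> = t * \<mu> - t / \<mu>" by simp
    then show ?thesis by (simp add: B_def algebra_simps)
  qed
  ultimately show ?thesis using GL2_subgroup_cancel_left[OF subgroup_H B] by simp
qed

(* The case of GF(3), where every unit squares to 1. *)
lemma lower_unipotent_mem_if_trace_ne_0:
  assumes a: "a \<noteq> 0" and two: "(2::'a) \<noteq> 0" shows "mat2 1 0 x 1 \<in> H"
proof (cases "x = 0")
  case True
  then show ?thesis using scalar_mem[of 1] by (simp add: mat_eq_mat2)
next
  case False
  define r where "r = - 2 * a / x"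
  have r: "r \<noteq> 0" using a two False by (simp add: r_def)
  have M: "mat2 a r (- c / r) 0 \<in> H" and M': "mat2 a (- r) (c / r) 0 \<in> H"
    using r by (auto intro!: char_class_mem simp: char_class_def)
  have "mat2 a r (- c / r) 0 ** mat2 1 0 x 1 = mat (-1) ** mat2 a (- r) (c / r) 0"
    using False by (simp add: mat_eq_mat2 r_def field_simps)
  then show ?thesis
    using GL2_subgroup_cancel_left[OF subgroup_H M] mult_mem[OF scalar_mem M'] by simp
qed

lemma lower_unipotent_mem: "mat2 1 0 x 1 \<in> H"
  using non_involutive_unit_or_F3 lower_unipotent_mem_if_unit lower_unipotent_mem_if_trace_ne_0
  by blast

lemma upper_unipotent_mem: "mat2 1 x 0 1 \<in> H"
proof -
  have "mat2 0 1 1 0 ** mat2 (1::'a) 0 x 1 ** mat2 0 1 1 0 = mat2 1 x 0 1" by simp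
  moreover have "mat2 0 1 1 0 ** mat2 0 1 1 0 = (mat 1 :: 'a^2^2)" by (simp add: mat_eq_mat2)
  ultimately show ?thesis using GL2_normal_conj[OF normal lower_unipotent_mem] by metis
qed

lemma det_1_mem:
  assumes "det A = 1" shows "A \<in> H"
proof -
  have mem: "mat2 p q r s \<in> H" if "p * s - q * r = 1" "r \<noteq> 0" for p q r s
  proof -
    have "mat2 1 ((p - 1) / r) 0 1 ** mat2 1 0 r 1 ** mat2 1 ((s - 1) / r) 0 1 = mat2 p q r s"
      using that by (simp add: field_simps)
    then show ?thesis
      using mult_mem[OF mult_mem[OF upper_unipotent_mem lower_unipotent_mem] upper_unipotent_mem]
      by metis
  qed
  obtain p q r s where A: "A = mat2 p q r s" by (rule mat2_cases)
  show ?thesis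
  proof (cases "r = 0")
    case True
    have "mat2 1 0 1 1 ** A = mat2 p q p (q + s)" using True by (simp add: A)
    moreover have "mat2 p q p (q + s) \<in> H"
      using assms True by (intro mem) (auto simp: A algebra_simps)
    ultimately show ?thesis
      using GL2_subgroup_cancel_left[OF subgroup_H lower_unipotent_mem] by metis
  next
    case False
    then show ?thesis using assms mem by (simp add: A)
  qed
qed

lemma square_det_mem:
  assumes "det A = z * z" "z \<noteq> 0" shows "A \<in> H"
proof -
  have "det (mat (1 / z) ** A) = 1"
    using assms by (simp add: det_mul mat_eq_mat2 field_simps)
  moreover have "mat z ** mat (1 / z) = (mat 1 :: 'a^2^2)"
    using assms by (simp add: mat_eq_mat2)
  then have "mat z ** (mat (1 / z) ** A) = A"
    by (simp add: matrix_mul_assoc)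
  ultimately show ?thesis using mult_mem[OF scalar_mem det_1_mem] assms(2) by metis
qed

lemma GL2_subset: "carrier GL2 \<subseteq> H"
proof
  fix A :: "'a^2^2" assume "A \<in> carrier GL2"
  then obtain z where z: "det A = z * z \<or> det A = c * (z * z)" and "det A \<noteq> 0"
    using square_classes by auto
  then have "z \<noteq> 0" by auto
  show "A \<in> H"
  proof (cases "det A = z * z")
    case True
    then show ?thesis using square_det_mem \<open>z \<noteq> 0\<close> by blast
  next
    case False
    define C' where "C' = mat2 (a / c) 1 (- 1 / c) 0"
    have "det (C' ** A) = z * z"
      using z False c_ne_0 by (simp add: C'_def det_mul field_simps)
    then have "C' ** A \<in> H" using square_det_mem \<open>z \<noteq> 0\<close> by blast
    moreover have "companion a c ** (C' ** A) = A"
      using c_ne_0 by (simp add: C'_def companion_def matrix_mul_assoc mat_eq_mat2 flip: mat_eq_mat2)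
    ultimately show ?thesis
      using mult_mem char_class_mem[OF companion_mem] by metis
  qed
qed

end

lemma generate_sharp_set: "generate GL2 (sharp_set a c) = carrier GL2"
proof -
  interpret group GL2 by (rule group_GL2)
  have sub: "sharp_set a c \<subseteq> carrier GL2" using sharp_set_det by auto
  have "generate GL2 (sharp_set a c) \<lhd> GL2"
  proof (rule normal_generateI[OF sub])
    fix t g :: "'a^2^2" assume t: "t \<in> sharp_set a c" and g: "g \<in> carrier GL2"
    show "g \<otimes>\<^bsub>GL2\<^esub> t \<otimes>\<^bsub>GL2\<^esub> inv\<^bsub>GL2\<^esub> g \<in> sharp_set a c"
      using sharp_set_GL2_conj[OF t inv_closed[OF g]] g by simp
  qed
  moreover have "sharp_set a c \<subseteq> generate GL2 (sharp_set a c)"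
    by (auto intro: generate.incl)
  ultimately have "carrier GL2 \<subseteq> generate GL2 (sharp_set a c)"
    by (rule GL2_subset)
  then show ?thesis using generate_in_carrier[OF sub] by blast
qed

end

section \<open>Choice of the parameters in a finite field\<close>

lemma card_square_roots_le_2: "card {z::'a::field. z * z = s} \<le> 2"
proof (cases "\<exists>w. w * w = s")
  case True
  then obtain w where w: "w * w = s" by blast
  have "{z. z * z = s} \<subseteq> {w, - w}"
  proof
    fix z assume "z \<in> {z. z * z = s}"
    then have "(z - w) * (z + w) = 0" using w by (simp add: algebra_simps)
    then show "z \<in> {w, - w}" by (auto simp: add_eq_0_iff2)
  qed
  then have "card {z. z * z = s} \<le> card {w, - w}" by (intro card_mono) auto
  also have "\<dots> \<le> 2" by (simp add: card_insert_le_m1)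
  finally show ?thesis .
qed simp

lemma exists_square_class_representative:
  "\<exists>c::'a::{field,finite}. c \<noteq> 0 \<and> (\<forall>d. d \<noteq> 0 \<longrightarrow> (\<exists>z. d = z * z \<or> d = c * (z * z)))"
proof (cases "\<forall>d::'a. d \<noteq> 0 \<longrightarrow> (\<exists>z. d = z * z)")
  case False
  then obtain c :: 'a where c: "c \<noteq> 0" "\<And>z. c \<noteq> z * z" by auto
  define Sq where "Sq = (\<lambda>z::'a. z * z) ` (- {0})"
  have disjoint: "Sq \<inter> (*) c ` Sq = {}"
  proof (rule ccontr)
    assume "Sq \<inter> (*) c ` Sq \<noteq> {}"
    then obtain z w :: 'a where "w \<noteq> 0" "z * z = c * (w * w)" by (auto simp: Sq_def)
    then have "c = (z / w) * (z / w)" by (simp add: field_simps)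
    then show False using c(2) by blast
  qed
  have "card (- {0::'a}) \<le> card (\<Union>s\<in>Sq. {z. z * z = s})"
    by (rule card_mono) (auto simp: Sq_def)
  also have "\<dots> \<le> (\<Sum>s\<in>Sq. card {z::'a. z * z = s})" by (rule card_UN_le) simp
  also have "\<dots> \<le> (\<Sum>s\<in>Sq. 2)" by (rule sum_mono) (rule card_square_roots_le_2)
  also have "\<dots> = card Sq + card ((*) c ` Sq)"
    using c(1) by (simp add: card_image inj_on_def)
  also have "\<dots> = card (Sq \<union> (*) c ` Sq)"
    using disjoint by (simp add: card_Un_disjoint)
  finally have "Sq \<union> (*) c ` Sq = - {0}"
    using c(1) by (intro card_seteq) (auto simp: Sq_def)
  then have "\<forall>d. d \<noteq> 0 \<longrightarrow> (\<exists>z. d = z * z \<or> d = c * (z * z))"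
    by (auto simp: Sq_def)
  then show ?thesis using c(1) by blast
qed (rule exI[of _ 1], auto)

lemma exists_irreducible_quadratic:
  fixes c :: "'a::{field,finite}"
  assumes c: "c \<noteq> 0"
  shows "\<exists>a. \<forall>r. r * r - a * r + c \<noteq> 0"
proof -
  have "card ((\<lambda>r. r + c / r) ` (- {0})) \<le> card (- {0::'a})" by (rule card_image_le) simp
  also have "\<dots> < CARD('a)" unfolding Compl_eq_Diff_UNIV by (rule card_Diff1_less) simp_all
  finally have "(\<lambda>r. r + c / r) ` (- {0}) \<noteq> UNIV" by auto
  then obtain a where a: "a \<notin> (\<lambda>r. r + c / r) ` (- {0})" by blast
  have "r * r - a * r + c \<noteq> 0" for r
  proof
    assume root: "r * r - a * r + c = 0"
    then have "r \<noteq> 0" using c by auto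
    with root have "a = r + c / r" by (simp add: field_simps)
    with a \<open>r \<noteq> 0\<close> show False by auto
  qed
  then show ?thesis by blast
qed

lemma exists_ne_0_1:
  assumes "CARD('a::{zero,one,finite}) > 2" shows "\<exists>\<mu>::'a. \<mu> \<noteq> 0 \<and> \<mu> \<noteq> 1"
proof (rule ccontr)
  assume "\<not> ?thesis"
  then have "(UNIV :: 'a set) \<subseteq> {0, 1}" by auto
  then have "CARD('a) \<le> card {0::'a, 1}" by (rule card_mono[rotated]) simp
  also have "\<dots> \<le> 2" by (simp add: card_insert_le_m1)
  finally show False using assms by simp
qed

theorem proposition7p1:
  assumes "CARD('a::{field,finite}) > 2"
  shows "\<exists>(L::nat set) m.
           is_loop L m \<and> finite L \<and> card L = CARD('a)^2 - 1 \<and>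
           right_conj_closed L m \<and>
           right_mult_group L m \<cong> (GL2 :: ('a ^ 2 ^ 2) monoid)"
proof -
  obtain c :: 'a where c: "c \<noteq> 0" "\<And>d. d \<noteq> 0 \<Longrightarrow> \<exists>z. d = z * z \<or> d = c * (z * z)"
    using exists_square_class_representative by blast
  obtain a :: 'a where a: "\<And>r. r * r - a * r + c \<noteq> 0"
    using exists_irreducible_quadratic[OF c(1)] by blast
  interpret GL2_generating a c
    using a c exists_ne_0_1[OF assms] by unfold_locales
  obtain enc :: "'a^2 \<Rightarrow> nat" where "inj enc"
    using finite_imp_inj_to_nat_seg[of "UNIV :: ('a^2) set"] by auto
  then interpret quadratic_plane a c enc by unfold_locales
  interpret L: sharply_transitive points "lin_perm ` sharp_set a c" "enc (vec2 1 0)"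
    by (rule sharply_transitive_lin_perm)
  have sharp_GL2: "sharp_set a c \<subseteq> carrier GL2" using sharp_set_det by auto
  have "card points = CARD('a)^2 - 1"
    using \<open>inj enc\<close>
    by (simp add: points_def card_image inj_on_subset Compl_eq_Diff_UNIV card_Diff_singleton
        CARD_vec)
  moreover have "right_conj_closed points L.smult"
    using sharp_set_GL2_conj sharp_GL2
    by (intro L.right_conj_closed_image[OF group_hom_lin_perm sharp_GL2 refl]) blast
  moreover have "right_mult_group points L.smult \<cong> (GL2 :: ('a^2^2) monoid)"
    by (rule L.right_mult_group_iso[OF group_hom_lin_perm inj_on_lin_perm sharp_GL2 refl
          generate_sharp_set])
  ultimately show ?thesis
    using L.is_loop_smult by (intro exI[of _ points] exI[of _ L.smult]) (simp add: points_def)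
qed

end
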